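(* For every integer $N\ge 12$, there exists an equal norm tight integer frame with $2N$ elements in $\mathcal{H}_5$.
   Context: $\mathcal{H}_M$ is the real $M$-dimensional Hilbert space, identified with $\mathbb{R}^M$ via a fixed orthonormal basis. An equal norm tight integer frame (ENTIF) with $N$ elements in $\mathcal{H}_M$ is an $M\times N$ integer matrix $A$ of rank $M$ with $AA^T=\lambda I_M$ for some $\lambda>0$ and all columns of the same Euclidean norm. *)

theory Defs
  imports Complex_Main
begin

text \<open>An M x N integer matrix is represented as a function A :: nat => nat => int,
  with A i j the entry in row i < M, column j < N (entries outside are irrelevant).\<close>

definition full_row_rank :: "nat \<Rightarrow> nat \<Rightarrow> (nat \<Rightarrow> nat \<Rightarrow> int) \<Rightarrow> bool" where
  "full_row_rank M N A \<longleftrightarrow>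
     (\<forall>c :: nat \<Rightarrow> real. (\<forall>j<N. (\<Sum>i<M. c i * real_of_int (A i j)) = 0) \<longrightarrow> (\<forall>i<M. c i = 0))"

definition is_ENTIF :: "nat \<Rightarrow> nat \<Rightarrow> (nat \<Rightarrow> nat \<Rightarrow> int) \<Rightarrow> bool" where
  "is_ENTIF M N A \<longleftrightarrow>
     full_row_rank M N A \<and>
     (\<exists>lam::real. lam > 0 \<and>
        (\<forall>i<M. \<forall>k<M. real_of_int (\<Sum>j<N. A i j * A k j) = (if i = k then lam else 0))) \<and>
     (\<forall>j<N. \<forall>j'<N. (\<Sum>i<M. (A i j)^2) = (\<Sum>i<M. (A i j')^2))"

end

theory Submission
  imports Defs
begin

text \<open>Frames of 8 and 10 integer vectors of squared norm 5 in dimension 5, each tight with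
  frame bound equal to its size, can be concatenated: concatenation adds the frame operators
  and keeps the column norms. Since every integer at least 12 is of the form 4a + 5b,
  every 2N with N \<ge> 12 is a sum 8a + 10b of such sizes.\<close>

definition tight_integer_frame ::
    "nat \<Rightarrow> nat \<Rightarrow> (nat \<Rightarrow> nat \<Rightarrow> int) \<Rightarrow> int \<Rightarrow> int \<Rightarrow> bool" where
  "tight_integer_frame M N A lam c \<longleftrightarrow>
     (\<forall>i<M. \<forall>k<M. (\<Sum>j<N. A i j * A k j) = (if i = k then lam else 0)) \<and>
     (\<forall>j<N. (\<Sum>i<M. (A i j)^2) = c)"

definition frame_append ::
    "nat \<Rightarrow> (nat \<Rightarrow> nat \<Rightarrow> int) \<Rightarrow> (nat \<Rightarrow> nat \<Rightarrow> int) \<Rightarrow> nat \<Rightarrow> nat \<Rightarrow> int" where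
  "frame_append N A B i j = (if j < N then A i j else B i (j - N))"

definition frame_of_columns :: "int list list \<Rightarrow> nat \<Rightarrow> nat \<Rightarrow> int" where
  "frame_of_columns cs i j = cs ! j ! i"

lemma tight_integer_frame_empty: "tight_integer_frame M 0 A 0 c"
  by (simp add: tight_integer_frame_def)

lemma sum_lessThan_add:
  "(\<Sum>j<m + n. f j) = (\<Sum>j<m. f j) + (\<Sum>j<n. f (m + (j::nat)))"
  by (induction n) (simp_all add: add.assoc)

lemma tight_integer_frame_append:
  assumes A: "tight_integer_frame M N1 A l1 c" and B: "tight_integer_frame M N2 B l2 c"
  shows "tight_integer_frame M (N1 + N2) (frame_append N1 A B) (l1 + l2) c"
proof -
  have "(\<Sum>j<N1 + N2. frame_append N1 A B i j * frame_append N1 A B k j)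
      = (\<Sum>j<N1. A i j * A k j) + (\<Sum>j<N2. B i j * B k j)" for i k
    by (simp add: sum_lessThan_add frame_append_def)
  moreover have "(\<Sum>i<M. (frame_append N1 A B i j)^2) = c" if "j < N1 + N2" for j
    using A B that by (cases "j < N1") (auto simp: tight_integer_frame_def frame_append_def)
  ultimately show ?thesis
    using A B by (simp add: tight_integer_frame_def)
qed

lemma tight_integer_frame_imp_full_row_rank:
  assumes tight: "tight_integer_frame M N A lam c" and "lam \<noteq> 0"
  shows "full_row_rank M N A"
  unfolding full_row_rank_def
proof (intro allI impI)
  fix c :: "nat \<Rightarrow> real" and k
  assume comb: "\<forall>j<N. (\<Sum>i<M. c i * real_of_int (A i j)) = 0" and "k < M"
  have "0 = (\<Sum>j<N. (\<Sum>i<M. c i * real_of_int (A i j)) * real_of_int (A k j))"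
    using comb by simp
  also have "\<dots> = (\<Sum>i<M. c i * real_of_int (\<Sum>j<N. A i j * A k j))"
    by (simp add: sum_distrib_left sum_distrib_right sum.swap[of _ "{..<M}"] mult.assoc)
  also have "\<dots> = (\<Sum>i<M. if i = k then c k * real_of_int lam else 0)"
    using tight \<open>k < M\<close> by (intro sum.cong) (auto simp: tight_integer_frame_def)
  also have "\<dots> = c k * real_of_int lam"
    using \<open>k < M\<close> by simp
  finally show "c k = 0"
    using \<open>lam \<noteq> 0\<close> by simp
qed

lemma tight_integer_frame_imp_is_ENTIF:
  assumes "tight_integer_frame M N A lam c" and "lam > 0"
  shows "is_ENTIF M N A"
proof -
  have "\<forall>i<M. \<forall>k<M. real_of_int (\<Sum>j<N. A i j * A k j) = (if i = k then real_of_int lam else 0)"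
    using assms(1) by (simp add: tight_integer_frame_def)
  moreover have "full_row_rank M N A"
    using assms by (simp add: tight_integer_frame_imp_full_row_rank)
  ultimately show ?thesis
    using assms unfolding is_ENTIF_def tight_integer_frame_def
    by (intro conjI exI[of _ "real_of_int lam"]) auto
qed

lemma less_5_cases: "(i::nat) < 5 \<longleftrightarrow> i = 0 \<or> i = 1 \<or> i = 2 \<or> i = 3 \<or> i = 4"
  by auto

lemma tight_integer_frame_8:
  "tight_integer_frame 5 8 (frame_of_columns
     [[0, 0, 0, 1, -2], [0, 0, 0, 1, 2], [0, 0, 2, -1, 0], [0, 0, 2, 1, 0],
      [0, 2, 0, -1, 0], [0, 2, 0, 1, 0], [2, 0, 0, -1, 0], [2, 0, 0, 1, 0]]) 8 5"
proof -
  have "j < 8 \<longleftrightarrow> j \<in> {0, 1, 2, 3, 4, 5, 6, 7}" for j :: nat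
    by auto
  then show ?thesis
    unfolding tight_integer_frame_def less_5_cases
    by (auto simp: frame_of_columns_def numeral_eq_Suc lessThan_Suc)
qed

lemma tight_integer_frame_10:
  "tight_integer_frame 5 10 (frame_of_columns
     [[0, 0, 0, 1, -2], [0, 0, 0, 1, -2], [0, 0, 0, 2, 1], [0, 0, 0, 2, 1], [0, 1, -2, 0, 0],
      [0, 1, 2, 0, 0], [1, -2, 0, 0, 0], [1, 2, 0, 0, 0], [2, 0, -1, 0, 0], [2, 0, 1, 0, 0]]) 10 5"
proof -
  have "j < 10 \<longleftrightarrow> j \<in> {0, 1, 2, 3, 4, 5, 6, 7, 8, 9}" for j :: nat
    by auto
  then show ?thesis
    unfolding tight_integer_frame_def less_5_cases
    by (auto simp: frame_of_columns_def numeral_eq_Suc lessThan_Suc)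
qed

lemma tight_integer_frame_8a_10b:
  "\<exists>A. tight_integer_frame 5 (8 * a + 10 * b) A (int (8 * a + 10 * b)) 5"
proof (induction a)
  case 0
  show ?case
  proof (induction b)
    case 0
    show ?case using tight_integer_frame_empty by auto
  next
    case (Suc b)
    then obtain A where "tight_integer_frame 5 (10 * b) A (int (10 * b)) 5"
      by auto
    from tight_integer_frame_append[OF tight_integer_frame_10 this]
    show ?case by (auto simp: algebra_simps)
  qed
next
  case (Suc a)
  then obtain A where "tight_integer_frame 5 (8 * a + 10 * b) A (int (8 * a + 10 * b)) 5"
    by auto
  from tight_integer_frame_append[OF tight_integer_frame_8 this]
  show ?case by (auto simp: algebra_simps)
qed

lemma ex_4a_5b:
  assumes "(n::nat) \<ge> 12"
  shows "\<exists>a b. n = 4 * a + 5 * b"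
proof -
  have "n mod 4 < 4" "n = 4 * (n div 4) + n mod 4"
    by simp_all
  then have "n mod 4 \<le> n div 4"
    using assms by linarith
  then have "n = 4 * (n div 4 - n mod 4) + 5 * (n mod 4)"
    using \<open>n = 4 * (n div 4) + n mod 4\<close> by linarith
  then show ?thesis by blast
qed

theorem corollary6p8:
  fixes N :: nat
  assumes "N \<ge> 12"
  shows "\<exists>A. is_ENTIF 5 (2 * N) A"
proof -
  obtain a b where "N = 4 * a + 5 * b"
    using ex_4a_5b[OF assms] by blast
  then have size: "2 * N = 8 * a + 10 * b"
    by simp
  obtain A where "tight_integer_frame 5 (2 * N) A (int (2 * N)) 5"
    using tight_integer_frame_8a_10b[of a b] unfolding size by blast
  moreover have "int (2 * N) > 0"
    using assms by simp
  ultimately show ?thesis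
    using tight_integer_frame_imp_is_ENTIF by blast
qed

end
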